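(* Let $\alpha\in(0,1)$ and let $\bm A,\bm B\in\mathbb{C}^{N\times N}$ be orthogonal projection matrices. Define $\widetilde\Delta_0=\operatorname{Tr}(\bm A)-\alpha N$ and, for $k\ge1$, $$\widetilde\Delta_k=-\sum_{a=0}^{k-1}\widetilde\Delta_a\sum_{j=1}^{k-1}(-\alpha)^{k-j}q_{k,j,a}(1)+\mathbf 1\{k\text{ odd}\}\,2\alpha^k\big(\operatorname{Tr}(\bm B)-\tfrac12N\big)+\operatorname{Tr}\Big(\big((\bm A-\alpha\bm I_N)(2\bm B-\bm I_N)\big)^k\Big).$$ Also define $\widetilde\delta_0=\operatorname{Tr}(\bm A)-\alpha N$ and, for $k\ge1$, $$\widetilde\delta_k=\operatorname{Tr}\Big(\big((\bm A-\alpha\bm I_N)(2\bm B-\bm I_N)\big)^k\Big)+\mathbf 1\{k\text{ even}\}\,2\alpha^k\big(\operatorname{Tr}(\bm A)-\alpha N\big)+\mathbf 1\{k\text{ odd}\}\,2\alpha^k\big(\operatorname{Tr}(\bm B)-\tfrac12N\big).$$ Then for all $k\ge1$, $$\widetilde\Delta_k=\sum_{\substack{0\le a\le k\\ a\equiv k\ (\mathrm{mod}\ 2)}}\binom{k}{\frac{k+a}2}(\alpha(1-\alpha))^{\frac{k-a}2}\,\widetilde\delta_a.$$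
   Context: For $k\ge1$ and a nonempty $S=\{s_1<\dots<s_j\}\subseteq[k]$, define $p_1(S)=s_2-s_1,\dots,p_{j-1}(S)=s_j-s_{j-1}$, $p_j(S)=k+s_1-s_j$. For $1\le j\le k$ and $0\le a\le j$ define $$q_{k,j,a}(x)=\sum_{S\subseteq[k],\,|S|=j}\ \sum_{A\subseteq[j],\,|A|=a}\ \prod_{i=1}^j\Big(\sum_{b=0}^{p_i(S)-1}(-1)^{p_i(S)-1-b}x^b+(-1)^{p_i(S)}\mathbf 1\{i\notin A\}\Big),$$ and set $q_{k,0,0}=0$ and $q_{k,j,a}=0$ when $a>j$. *)

theory Defs
  imports "Jordan_Normal_Form.Matrix"
begin

definition tr :: "'a::comm_monoid_add mat \<Rightarrow> 'a" where
  "tr M = (\<Sum>i<dim_row M. M $$ (i,i))"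

definition orth_proj :: "nat \<Rightarrow> complex mat \<Rightarrow> bool" where
  "orth_proj N M \<longleftrightarrow> M \<in> carrier_mat N N \<and>
     (\<forall>i<N. \<forall>j<N. M $$ (i,j) = cnj (M $$ (j,i))) \<and> M * M = M"

(* p_i(S) for 1 <= i <= j = |S|, S = {s_1 < ... < s_j} \<subseteq> [k] *)
definition gap :: "nat \<Rightarrow> nat set \<Rightarrow> nat \<Rightarrow> nat" where
  "gap k S i = (let s = sorted_list_of_set S; j = card S in
     if i < j then s ! i - s ! (i - 1) else k + s ! 0 - s ! (j - 1))"

definition qpoly :: "nat \<Rightarrow> nat \<Rightarrow> nat \<Rightarrow> 'a::comm_ring_1 \<Rightarrow> 'a" where
  "qpoly k j a x = (if j = 0 \<or> a > j then 0 else
     (\<Sum>S\<in>{S. S \<subseteq> {1..k} \<and> card S = j}.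
       \<Sum>A\<in>{A. A \<subseteq> {1..j} \<and> card A = a}.
         \<Prod>i\<in>{1..j}. ((\<Sum>b=0..<gap k S i. (-1) ^ (gap k S i - 1 - b) * x ^ b)
            + (-1) ^ gap k S i * (if i \<notin> A then 1 else 0))))"

end

theory Submission
  imports Defs "HOL-Computational_Algebra.Polynomial"
begin

text \<open>
  At x = 1 the i-th factor of q(k,j,a) is 1 exactly when membership of i in A agrees with the
  parity of the gap p_i(S), so q(k,j,a)(1) counts the j-subsets of [k] with a odd cyclic gaps.
  Weighting each nonempty S by (-c)^(k-|S|) X^(number of odd gaps) and scanning [k] from left to
  right gives the trace of a product of 2 x 2 transfer matrices; summed over all S this is the
  trace of the k-th power of a matrix with trace X and determinant c(1 - c), i.e. the Dickson
  polynomial D_k(X, c(1 - c)) = u^k + v^k with u + v = X and u v = c(1 - c), where S = {}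
  contributes 2 c^k for even k.  Taking c = alpha, the recursion for Delta is a unitriangular
  linear system whose k-th row holds the coefficients of D_k, and expanding the powers of X in
  the Dickson basis by the binomial theorem shows that the stated binomial sums solve it.
\<close>

section \<open>Odd cyclic gaps\<close>

lemma alternating_sum_ones: "(\<Sum>b<p. (-1::'a::comm_ring_1) ^ (p - 1 - b)) = of_bool (odd p)"
proof -
  have "(\<Sum>b<p. (-1::'a) ^ (p - 1 - b)) = (\<Sum>b<p. (-1) ^ b)"
    using sum.nat_diff_reindex[of "\<lambda>b. (-1::'a) ^ b" p] by simp
  also have "\<dots> = of_bool (odd p)"
    by (induction p) auto
  finally show ?thesis .
qed

lemma prod_of_bool:
  "finite I \<Longrightarrow> (\<Prod>i\<in>I. of_bool (P i) :: 'a::comm_semiring_1) = of_bool (\<forall>i\<in>I. P i)"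
  by (induction I rule: finite_induct) auto

lemma sorted_list_of_set_insert_greater:
  assumes "finite S" "\<forall>y\<in>S. y < m"
  shows "sorted_list_of_set (insert m S) = sorted_list_of_set S @ [m]"
  using assms by (intro sorted_list_of_set_unique[THEN iffD1]) (auto simp: sorted_wrt_append)

lemma sorted_list_of_set_nth_last:
  assumes "finite S" "S \<noteq> {}"
  shows "sorted_list_of_set S ! (card S - 1) = Max S"
proof -
  have "S = insert (Max S) (S - {Max S})" using assms Max_in by auto
  moreover have "\<forall>y\<in>S - {Max S}. y < Max S" using assms by (auto simp: order.strict_iff_order)
  ultimately have "sorted_list_of_set S = sorted_list_of_set (S - {Max S}) @ [Max S]"
    using assms sorted_list_of_set_insert_greater[of "S - {Max S}" "Max S"] by simp
  moreover have "card (S - {Max S}) = card S - 1" using assms by simp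
  ultimately show ?thesis by (simp add: nth_append)
qed

definition odd_inner_gaps :: "nat set \<Rightarrow> nat" where
  "odd_inner_gaps S = card {i\<in>{1..<card S}.
     odd (sorted_list_of_set S ! i - sorted_list_of_set S ! (i - 1))}"

definition odd_gaps :: "nat \<Rightarrow> nat set \<Rightarrow> nat" where
  "odd_gaps k S = card {i\<in>{1..card S}. odd (gap k S i)}"

lemma card_filter_atLeastLessThan_Suc:
  "card {i\<in>{m..<Suc n}. P i} = card {i\<in>{m..<n}. P i} + of_bool (m \<le> n \<and> P n)"
proof -
  have "{i\<in>{m..<Suc n}. P i} = {i\<in>{m..<n}. P i} \<union> (if m \<le> n \<and> P n then {n} else {})"
    by (auto simp: less_Suc_eq)
  then show ?thesis by (simp add: card_insert_if)
qed

lemma odd_inner_gaps_insert_greater: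
  assumes "finite S" "S \<noteq> {}" "\<forall>y\<in>S. y < m"
  shows "odd_inner_gaps (insert m S) = odd_inner_gaps S + of_bool (odd (m - Max S))"
proof -
  let ?s = "sorted_list_of_set S"
  have s: "sorted_list_of_set (insert m S) = ?s @ [m]"
    by (rule sorted_list_of_set_insert_greater[OF assms(1,3)])
  have card: "card (insert m S) = Suc (card S)" and "card S \<ge> 1"
    using assms by (auto simp: Suc_le_eq card_gt_0_iff)
  moreover have "{i\<in>{1..<card S}. odd ((?s @ [m]) ! i - (?s @ [m]) ! (i - 1))}
      = {i\<in>{1..<card S}. odd (?s ! i - ?s ! (i - 1))}"
    by (auto simp: nth_append)
  moreover have "(?s @ [m]) ! card S - (?s @ [m]) ! (card S - 1) = m - Max S"
    using sorted_list_of_set_nth_last[OF assms(1,2)] \<open>card S \<ge> 1\<close> by (simp add: nth_append)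
  ultimately show ?thesis
    unfolding odd_inner_gaps_def s card card_filter_atLeastLessThan_Suc by simp
qed

lemma odd_gaps_eq:
  assumes "finite S" "S \<noteq> {}"
  shows "odd_gaps k S = odd_inner_gaps S + of_bool (odd (k + Min S - Max S))"
proof -
  let ?s = "sorted_list_of_set S"
  have "card S \<ge> 1" using assms by (simp add: Suc_le_eq card_gt_0_iff)
  have inner: "{i\<in>{1..<card S}. odd (gap k S i)} = {i\<in>{1..<card S}. odd (?s ! i - ?s ! (i - 1))}"
    by (auto simp: gap_def Let_def)
  have last: "gap k S (card S) = k + Min S - Max S"
    using sorted_list_of_set_nonempty[OF assms] sorted_list_of_set_nth_last[OF assms]
    by (simp add: gap_def Let_def)
  have "odd_gaps k S = card {i\<in>{1..<Suc (card S)}. odd (gap k S i)}"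
    unfolding odd_gaps_def atLeastLessThanSuc_atLeastAtMost ..
  also have "\<dots> = odd_inner_gaps S + of_bool (odd (k + Min S - Max S))"
    unfolding card_filter_atLeastLessThan_Suc inner last odd_inner_gaps_def
    using \<open>card S \<ge> 1\<close> by simp
  finally show ?thesis .
qed

lemma odd_gaps_le_card: "odd_gaps k S \<le> card S"
proof -
  have "odd_gaps k S \<le> card {1..card S}"
    unfolding odd_gaps_def by (intro card_mono) auto
  then show ?thesis by simp
qed

lemma odd_gaps_atLeastAtMost: "k \<ge> 1 \<Longrightarrow> odd_gaps k {1..k} = k"
proof -
  assume k: "k \<ge> 1"
  have "sorted_list_of_set {1..k} = [1..<Suc k]"
    by (simp add: atLeastLessThanSuc_atLeastAtMost[symmetric] del: upt_Suc)
  then have "{i\<in>{1..<card {1..k}}. odd (sorted_list_of_set {1..k} ! i - sorted_list_of_set {1..k} ! (i - 1))}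
      = {1..<k}"
    by (auto simp del: upt_Suc)
  then have "odd_inner_gaps {1..k} = k - 1"
    by (simp add: odd_inner_gaps_def)
  moreover have "Min {1..k} = 1" "Max {1..k} = k" using k by (auto intro: Min_eqI Max_eqI)
  ultimately show ?thesis using k by (simp add: odd_gaps_eq)
qed

lemma qpoly_at_1:
  assumes "j \<ge> 1"
  shows "qpoly k j a (1::'a::comm_ring_1)
    = of_nat (card {S. S \<subseteq> {1..k} \<and> card S = j \<and> odd_gaps k S = a})"
proof -
  have factor: "(\<Sum>b=0..<p. (-1) ^ (p - 1 - b) * (1::'a) ^ b) + (-1) ^ p * (if i \<notin> A then 1 else 0)
      = of_bool ((i \<in> A) = odd p)" for p i and A :: "nat set"
    using alternating_sum_ones[where 'a='a, of p] by (auto simp: atLeast0LessThan)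
  have inner: "(\<Sum>A\<in>{A. A \<subseteq> {1..j} \<and> card A = a}. \<Prod>i\<in>{1..j}. of_bool ((i \<in> A) = odd (gap k S i)))
      = (of_bool (odd_gaps k S = a) :: 'a)" if "card S = j" for S
  proof -
    let ?O = "{i\<in>{1..j}. odd (gap k S i)}"
    have "(\<Prod>i\<in>{1..j}. of_bool ((i \<in> A) = odd (gap k S i))) = (of_bool (A = ?O) :: 'a)"
      if "A \<subseteq> {1..j}" for A
      using that by (subst prod_of_bool) auto
    then have "(\<Sum>A\<in>{A. A \<subseteq> {1..j} \<and> card A = a}. \<Prod>i\<in>{1..j}. of_bool ((i \<in> A) = odd (gap k S i)))
        = (\<Sum>A\<in>{A. A \<subseteq> {1..j} \<and> card A = a}. of_bool (A = ?O) :: 'a)"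
      by (intro sum.cong) auto
    also have "\<dots> = of_bool (odd_gaps k S = a)"
      using that by (auto simp: of_bool_def odd_gaps_def)
    finally show ?thesis .
  qed
  have "qpoly k j a (1::'a) = (\<Sum>S\<in>{S. S \<subseteq> {1..k} \<and> card S = j}. of_bool (odd_gaps k S = a))"
  proof (cases "a > j")
    case True
    then have "odd_gaps k S \<noteq> a" if "card S = j" for S
      using odd_gaps_le_card[of k S] that by linarith
    then show ?thesis
      using True by (simp add: qpoly_def sum.neutral)
  next
    case False
    then have nonzero: "\<not> (j = 0 \<or> a > j)" using assms by simp
    show ?thesis
      unfolding qpoly_def factor if_not_P[OF nonzero] by (rule sum.cong[OF refl], rule inner) simp
  qed
  also have "\<dots> = of_nat (card {S. S \<subseteq> {1..k} \<and> card S = j \<and> odd_gaps k S = a})"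
    by (simp add: Int_def)
  finally show ?thesis .
qed

section \<open>Products of 2 x 2 matrices\<close>

(* (M 1 * ... * M n) l l' for 2 x 2 matrices whose rows and columns are indexed by bool *)
fun bool_mat_prod :: "(nat \<Rightarrow> bool \<Rightarrow> bool \<Rightarrow> 'a::semiring_1) \<Rightarrow> nat \<Rightarrow> bool \<Rightarrow> bool \<Rightarrow> 'a" where
  "bool_mat_prod M 0 l l' = of_bool (l = l')"
| "bool_mat_prod M (Suc n) l l' =
     bool_mat_prod M n l False * M (Suc n) False l' + bool_mat_prod M n l True * M (Suc n) True l'"

lemma bool_mat_prod_cong:
  "(\<And>i. 1 \<le> i \<Longrightarrow> i \<le> n \<Longrightarrow> M i = M' i) \<Longrightarrow> bool_mat_prod M n = bool_mat_prod M' n"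
  by (induction n) (auto intro!: ext)

lemma sum_Pow_bool_mat_prod:
  fixes F :: "nat \<Rightarrow> bool \<Rightarrow> bool \<Rightarrow> bool \<Rightarrow> 'a::comm_semiring_1"
  shows "(\<Sum>S\<in>Pow {1..n}. bool_mat_prod (\<lambda>i. F i (i \<in> S)) n l l')
    = bool_mat_prod (\<lambda>i x y. F i False x y + F i True x y) n l l'"
proof (induction n arbitrary: l')
  case 0
  then show ?case by simp
next
  case (Suc n)
  let ?P = "\<lambda>S. bool_mat_prod (\<lambda>i. F i (i \<in> S)) n"
  have restrict: "bool_mat_prod (\<lambda>i. F i (i \<in> insert (Suc n) S)) n = ?P S" for S
    by (rule bool_mat_prod_cong) simp
  have split: "{1..Suc n} = insert (Suc n) {1..n}" by auto
  have new: "Suc n \<notin> {1..n}" by simp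
  then have disj: "Pow {1..n} \<inter> insert (Suc n) ` Pow {1..n} = {}" by blast
  have notin: "(Suc n \<in> S) = False" if "S \<in> Pow {1..n}" for S
    using that by auto
  have inj: "inj_on (insert (Suc n)) (Pow {1..n})"
    by (rule inj_onI) (metis Diff_insert_absorb PowD new subsetD)
  have "(\<Sum>S\<in>Pow {1..Suc n}. bool_mat_prod (\<lambda>i. F i (i \<in> S)) (Suc n) l l')
      = (\<Sum>S\<in>Pow {1..n}. bool_mat_prod (\<lambda>i. F i (i \<in> S)) (Suc n) l l')
      + (\<Sum>S\<in>Pow {1..n}. bool_mat_prod (\<lambda>i. F i (i \<in> insert (Suc n) S)) (Suc n) l l')"
    unfolding split Pow_insert
    by (subst sum.union_disjoint[OF _ _ disj], simp, simp) (simp only: sum.reindex[OF inj] o_def)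
  also have "\<dots> = (\<Sum>S\<in>Pow {1..n}. ?P S l False * F (Suc n) False False l' + ?P S l True * F (Suc n) False True l')
      + (\<Sum>S\<in>Pow {1..n}. ?P S l False * F (Suc n) True False l' + ?P S l True * F (Suc n) True True l')"
    unfolding bool_mat_prod.simps(2) restrict
    by (intro arg_cong2[where f = "(+)"] sum.cong refl) (simp_all only: notin insertI1 simp_thms)
  also have "\<dots> = bool_mat_prod (\<lambda>i x y. F i False x y + F i True x y) (Suc n) l l'"
    unfolding sum.distrib sum_distrib_right[symmetric] Suc.IH by (simp add: algebra_simps)
  finally show ?case .
qed

lemma bool_mat_prod_const_Suc_Suc:
  fixes T :: "bool \<Rightarrow> bool \<Rightarrow> 'a::comm_ring_1"
  shows "bool_mat_prod (\<lambda>_. T) (Suc (Suc n)) l l' =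
    (T False False + T True True) * bool_mat_prod (\<lambda>_. T) (Suc n) l l'
    - (T False False * T True True - T False True * T True False) * bool_mat_prod (\<lambda>_. T) n l l'"
proof (induction n arbitrary: l')
  case 0
  show ?case by (cases l; cases l') (simp_all add: algebra_simps)
next
  case (Suc n)
  let ?P = "bool_mat_prod (\<lambda>_. T)" and ?t = "T False False + T True True"
    and ?d = "T False False * T True True - T False True * T True False"
  have "?P (Suc (Suc (Suc n))) l l' = ?P (Suc (Suc n)) l False * T False l' + ?P (Suc (Suc n)) l True * T True l'"
    by (rule bool_mat_prod.simps(2))
  also have "\<dots> = ?t * (?P (Suc n) l False * T False l' + ?P (Suc n) l True * T True l')
      - ?d * (?P n l False * T False l' + ?P n l True * T True l')"
    unfolding Suc.IH by (simp only: algebra_simps)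
  also have "\<dots> = ?t * ?P (Suc (Suc n)) l l' - ?d * ?P (Suc n) l l'"
    by (simp only: bool_mat_prod.simps)
  finally show ?case .
qed

section \<open>Dickson polynomials\<close>

fun dickson :: "'a::comm_ring_1 \<Rightarrow> 'a \<Rightarrow> nat \<Rightarrow> 'a" where
  "dickson x a 0 = 2"
| "dickson x a (Suc 0) = x"
| "dickson x a (Suc (Suc n)) = x * dickson x a (Suc n) - a * dickson x a n"

lemma trace_bool_mat_prod_const:
  fixes T :: "bool \<Rightarrow> bool \<Rightarrow> 'a::comm_ring_1"
  shows "bool_mat_prod (\<lambda>_. T) n False False + bool_mat_prod (\<lambda>_. T) n True True
    = dickson (T False False + T True True) (T False False * T True True - T False True * T True False) n"
proof (induction "T False False + T True True" "T False False * T True True - T False True * T True False" n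
    rule: dickson.induct)
  case (3 n)
  show ?case
    unfolding dickson.simps(3) bool_mat_prod_const_Suc_Suc "3"[symmetric] by (simp only: algebra_simps)
qed simp_all

abbreviation dickson_poly :: "'a::comm_ring_1 \<Rightarrow> nat \<Rightarrow> 'a poly" where
  "dickson_poly a n \<equiv> dickson [:0, 1:] [:a:] n"

lemma coeff_dickson_poly_above: "n < i \<Longrightarrow> coeff (dickson_poly a n) i = 0"
proof (induction "[:0, 1::'a:]" "[:a:]" n arbitrary: i rule: dickson.induct)
  case 1
  then show ?case by (cases i) (simp_all add: numeral_poly)
next
  case 2
  then show ?case by (auto simp: coeff_pCons split: nat.split)
next
  case (3 n)
  then show ?case by (auto simp: coeff_pCons split: nat.split)
qed

lemma coeff_dickson_poly_top: "n \<ge> 1 \<Longrightarrow> coeff (dickson_poly a n) n = 1"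
proof (induction "[:0, 1::'a:]" "[:a:]" n rule: dickson.induct)
  case (3 n)
  then show ?case
    by (cases n) (simp_all add: coeff_pCons numeral_poly coeff_dickson_poly_above)
qed simp_all

(* With x = u + v and a = u v one has dickson x a n = u^n + v^n, and pairing the terms
   u^i v^(n-i) and u^(n-i) v^i of the binomial expansion gives
   x^n = (SUM d <= n. power_dickson_coeff a n d * dickson x a d), with dickson x a 0 read as 1. *)
definition power_dickson_coeff :: "'a::comm_ring_1 \<Rightarrow> nat \<Rightarrow> nat \<Rightarrow> 'a" where
  "power_dickson_coeff a n d =
     (if d \<le> n \<and> even (n + d) then of_nat (n choose ((n + d) div 2)) * a ^ ((n - d) div 2) else 0)"

lemma power_dickson_coeff_Suc_0: "power_dickson_coeff a (Suc n) 0 = 2 * a * power_dickson_coeff a n 1"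
proof (cases "even n")
  case False
  then obtain m where n: "n = Suc (2 * m)" by (metis oddE Suc_eq_plus1)
  have "Suc (2 * m) choose m = Suc (2 * m) choose Suc m"
    using binomial_symmetric[of m "Suc (2 * m)"] by simp
  then have binom: "Suc (Suc (2 * m)) choose Suc m = 2 * (Suc (2 * m) choose Suc m)"
    using binomial_Suc_Suc[of "Suc (2 * m)" m] by linarith
  have "power_dickson_coeff a (Suc n) 0 = of_nat (Suc (Suc (2 * m)) choose Suc m) * a ^ Suc m"
    "power_dickson_coeff a n 1 = of_nat (Suc (2 * m) choose Suc m) * a ^ m"
    by (simp_all add: n power_dickson_coeff_def del: binomial_Suc_Suc)
  with binom show ?thesis by (simp del: binomial_Suc_Suc add: algebra_simps)
qed (simp add: power_dickson_coeff_def)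

lemma power_dickson_coeff_Suc_Suc:
  "power_dickson_coeff a (Suc n) (Suc d) = power_dickson_coeff a n d + a * power_dickson_coeff a n (Suc (Suc d))"
proof (cases "d \<le> n \<and> even (n + d)")
  case True
  then obtain t where n: "n = d + 2 * t"
    by (metis add_diff_inverse_nat dvd_def not_le even_diff_nat)
  show ?thesis
  proof (cases t)
    case (Suc t')
    have "(d + 2 * t - Suc (Suc d)) div 2 = t'" using Suc by simp
    then show ?thesis using Suc by (simp add: n power_dickson_coeff_def algebra_simps)
  qed (simp add: n power_dickson_coeff_def)
qed (auto simp: power_dickson_coeff_def)

(* For n >= degree p: the coefficient of dickson [:0, 1:] [:a:] d in p, in the same reading. *)
definition dickson_coord :: "'a::comm_ring_1 \<Rightarrow> nat \<Rightarrow> 'a poly \<Rightarrow> nat \<Rightarrow> 'a" where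
  "dickson_coord a n p d = (\<Sum>i\<le>n. coeff p i * power_dickson_coeff a i d)"

lemma dickson_coord_pCons_0:
  "dickson_coord a (Suc n) (pCons 0 p) d =
     (if d = 0 then 2 * a * dickson_coord a n p 1
      else dickson_coord a n p (d - 1) + a * dickson_coord a n p (Suc d))"
proof -
  have "dickson_coord a (Suc n) (pCons 0 p) d = (\<Sum>i\<le>n. coeff p i * power_dickson_coeff a (Suc i) d)"
    unfolding dickson_coord_def sum.atMost_Suc_shift by simp
  then show ?thesis
    by (cases d) (simp_all add: dickson_coord_def power_dickson_coeff_Suc_0 power_dickson_coeff_Suc_Suc
        sum_distrib_left sum.distrib algebra_simps)
qed

lemma dickson_coord_diff:
  "dickson_coord a n (p - [:c:] * q) d = dickson_coord a n p d - c * dickson_coord a n q d"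
  by (simp add: dickson_coord_def algebra_simps sum_subtractf sum_distrib_left)

lemma dickson_coord_const: "dickson_coord a n [:c:] d = c * of_bool (d = 0)"
  unfolding dickson_coord_def
  by (subst sum.mono_neutral_right[of "{..n}" "{0}"]) (auto simp: power_dickson_coeff_def coeff_pCons
      split: nat.split)

lemma dickson_coord_dickson_poly:
  "k \<le> n \<Longrightarrow>
    dickson_coord a n (dickson_poly a k) d = (if k = 0 then 2 * of_bool (d = 0) else of_bool (d = k))"
proof (induction "[:0, 1::'a:]" "[:a:]" k arbitrary: n d rule: dickson.induct)
  case 1
  then show ?case by (simp add: numeral_poly dickson_coord_const)
next
  case 2
  then obtain n' where "n = Suc n'" by (cases n) auto
  then show ?case by (simp add: dickson_coord_pCons_0 dickson_coord_const)
next
  case (3 k)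
  then obtain n' where n: "n = Suc n'" and "Suc k \<le> n'" by (cases n) auto
  have "[:0, 1:] * dickson_poly a (Suc k) = pCons 0 (dickson_poly a (Suc k))" by simp
  then show ?case
    using "3"(1)[OF \<open>Suc k \<le> n'\<close>] "3"(2)[of n] "3"(3)
    by (simp only: dickson.simps dickson_coord_diff n dickson_coord_pCons_0) auto
qed

lemma sum_coeff_dickson_poly_power_expansion:
  assumes "k \<ge> 1"
  shows "(\<Sum>i\<le>k. coeff (dickson_poly a k) i * (\<Sum>d\<le>i. power_dickson_coeff a i d * x d)) = x k"
proof -
  have "(\<Sum>i\<le>k. coeff (dickson_poly a k) i * (\<Sum>d\<le>i. power_dickson_coeff a i d * x d))
      = (\<Sum>i\<le>k. coeff (dickson_poly a k) i * (\<Sum>d\<le>k. power_dickson_coeff a i d * x d))"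
    by (intro sum.cong refl arg_cong2[where f = "(*)"] sum.mono_neutral_left)
      (auto simp: power_dickson_coeff_def)
  also have "\<dots> = (\<Sum>d\<le>k. dickson_coord a k (dickson_poly a k) d * x d)"
    unfolding dickson_coord_def
    by (simp add: sum_distrib_left sum_distrib_right mult.assoc) (rule sum.swap)
  also have "\<dots> = (\<Sum>d\<le>k. if d = k then x d else 0)"
    using assms by (intro sum.cong) (auto simp: dickson_coord_dickson_poly)
  also have "\<dots> = x k"
    by simp
  finally show ?thesis .
qed

lemma sum_reduced_coeff_dickson_poly_power_expansion:
  assumes "k \<ge> 1"
  shows "(\<Sum>i\<le>k. (coeff (dickson_poly a k) i - of_bool (i = 0) * e) * (\<Sum>d\<le>i. power_dickson_coeff a i d * x d))
    = x k - e * x 0"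
proof -
  have "(\<Sum>i\<le>k. of_bool (i = 0) * e * (\<Sum>d\<le>i. power_dickson_coeff a i d * x d)) = e * x 0"
    by (simp add: sum.atMost_shift power_dickson_coeff_def flip: sum.atMost_Suc_shift)
  then show ?thesis
    using sum_coeff_dickson_poly_power_expansion[OF assms]
    by (simp add: left_diff_distrib sum_subtractf)
qed

lemma sum_same_parity_eq_power_dickson_coeff:
  "(\<Sum>i\<in>{i. i \<le> n \<and> i mod 2 = n mod 2}. of_nat (n choose ((n + i) div 2)) * a ^ ((n - i) div 2) * x i)
    = (\<Sum>i\<le>n. power_dickson_coeff a n i * x i)"
proof -
  have parity: "{i. i \<le> n \<and> i mod 2 = n mod 2} = {i\<in>{..n}. even (n + i)}"
    by auto presburger+
  show ?thesis
    unfolding parity sum.inter_filter[OF finite_atMost]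
    by (intro sum.cong) (auto simp: power_dickson_coeff_def)
qed

section \<open>The transfer matrix of odd gaps\<close>

(* Scanning [k] from left to right, the state is the parity of the distance from the last element
   of S met so far.  An element of S closes a gap, contributing X if that gap is odd, and resets
   the state; every other position flips it and contributes -c. *)
definition gap_step :: "'a::comm_ring_1 \<Rightarrow> bool \<Rightarrow> bool \<Rightarrow> bool \<Rightarrow> 'a poly" where
  "gap_step c s l l' =
     (if s then (if l' then 0 else if l then 1 else [:0, 1:]) else if l' = (\<not> l) then [:- c:] else 0)"

abbreviation gap_transfer :: "'a::comm_ring_1 \<Rightarrow> nat set \<Rightarrow> nat \<Rightarrow> bool \<Rightarrow> bool \<Rightarrow> 'a poly" where
  "gap_transfer c S n \<equiv> bool_mat_prod (\<lambda>i. gap_step c (i \<in> S)) n"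

lemma bool_mat_prod_Suc_gap_step_False:
  "M (Suc n) = gap_step c False \<Longrightarrow> bool_mat_prod M (Suc n) l l' = bool_mat_prod M n l (\<not> l') * [:- c:]"
  by (cases l') (simp_all add: gap_step_def)

lemma bool_mat_prod_Suc_gap_step_True:
  "M (Suc n) = gap_step c True \<Longrightarrow>
    bool_mat_prod M (Suc n) l l' = (if l' then 0 else bool_mat_prod M n l False * [:0, 1:] + bool_mat_prod M n l True)"
  by (simp add: gap_step_def)

lemma gap_transfer_empty:
  "gap_transfer c {} n l l' = (if l' = (l \<noteq> odd n) then [:(- c) ^ n:] else 0)"
  by (induction n arbitrary: l') (auto simp: bool_mat_prod_Suc_gap_step_False simp del: bool_mat_prod.simps(2))

lemma gap_transfer_nonempty:
  assumes "S \<subseteq> {1..n}" "S \<noteq> {}"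
  shows "gap_transfer c S n l l' =
    (if l' = odd (n - Max S)
     then monom ((- c) ^ (n - card S)) (odd_inner_gaps S + of_bool (l = odd (Min S - 1))) else 0)"
  using assms
proof (induction n arbitrary: S l')
  case 0
  then show ?case by auto
next
  case (Suc n)
  have fin: "finite S" using Suc.prems finite_subset by blast
  show ?case
  proof (cases "Suc n \<in> S")
    case False
    then have sub: "S \<subseteq> {1..n}" using Suc.prems by (auto simp: le_Suc_eq)
    then have "Max S \<le> n" "card S \<le> n"
      using Suc.prems(2) fin card_mono[OF _ sub] by (auto simp: Max_le_iff)
    then have diffs: "Suc n - Max S = Suc (n - Max S)" "Suc n - card S = Suc (n - card S)"
      by auto
    have step: "(if (\<not> l') = odd d then monom ((- c) ^ m) x else 0) * [:- c:]
        = (if l' = odd (Suc d) then monom ((- c) ^ Suc m) x else 0)" for d m x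
      by (cases l') (simp_all add: smult_monom minus_monom)
    have "gap_transfer c S (Suc n) l l' = gap_transfer c S n l (\<not> l') * [:- c:]"
      using False by (simp add: bool_mat_prod_Suc_gap_step_False del: bool_mat_prod.simps(2))
    then show ?thesis
      unfolding Suc.IH[OF sub Suc.prems(2)] diffs step .
  next
    case True
    define S' where "S' = S - {Suc n}"
    have sub: "S' \<subseteq> {1..n}" using Suc.prems by (auto simp: S'_def le_Suc_eq)
    have S: "S = insert (Suc n) S'" using True by (auto simp: S'_def)
    have transfer_S': "gap_transfer c S n = gap_transfer c S' n"
      by (rule bool_mat_prod_cong) (auto simp: S'_def)
    show ?thesis
    proof (cases "S' = {}")
      case True
      then show ?thesis
        using S transfer_S' gap_transfer_empty[of c n l]
        by (cases l; cases "odd n")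
          (auto simp: bool_mat_prod_Suc_gap_step_True monom_Suc monom_0 odd_inner_gaps_def
            simp del: bool_mat_prod.simps(2))
    next
      case False
      have fin': "finite S'" using sub finite_subset by blast
      have lt: "\<forall>y\<in>S'. y < Suc n" using sub by auto
      then have "Max S' \<le> n" "Max S = Suc n" "Min S = Min S'" "card S = Suc (card S')"
        using False fin' Min_in[OF fin' False] by (auto simp: S)
      moreover have "odd_inner_gaps S = odd_inner_gaps S' + of_bool (odd (Suc n - Max S'))"
        unfolding S by (rule odd_inner_gaps_insert_greater[OF fin' False lt])
      ultimately show ?thesis
        using Suc.IH[OF sub False] transfer_S' True
        by (auto simp: bool_mat_prod_Suc_gap_step_True Suc_diff_le monom_Suc
            simp del: bool_mat_prod.simps(2))
    qed
  qed
qed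

lemma trace_gap_transfer:
  assumes "S \<subseteq> {1..k}" "S \<noteq> {}"
  shows "gap_transfer c S k False False + gap_transfer c S k True True = monom ((- c) ^ (k - card S)) (odd_gaps k S)"
proof -
  have fin: "finite S" using assms finite_subset by blast
  have "Max S \<le> k" "Min S \<ge> 1" "Min S \<le> Max S"
    using assms fin by (auto simp: Max_le_iff Min_le_iff)
  then have "(odd (k - Max S) = odd (Min S - 1)) = odd (k + Min S - Max S)"
    by (auto simp: le_iff_add)
  then show ?thesis
    unfolding gap_transfer_nonempty[OF assms] odd_gaps_eq[OF fin assms(2)]
    by (cases "odd (k - Max S)") auto
qed

lemma dickson_poly_odd_gaps:
  fixes c :: "'a::comm_ring_1"
  shows "dickson_poly (c * (1 - c)) k
    = [:of_bool (even k) * 2 * c ^ k:] + (\<Sum>S\<in>Pow {1..k} - {{}}. monom ((- c) ^ (k - card S)) (odd_gaps k S))"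
proof -
  let ?T = "\<lambda>l l'. gap_step c False l l' + gap_step c True l l'"
  let ?trace = "\<lambda>S. gap_transfer c S k False False + gap_transfer c S k True True"
  have "?T False False + ?T True True = [:0, 1:]"
    "?T False False * ?T True True - ?T False True * ?T True False = [:c * (1 - c):]"
    by (simp_all add: gap_step_def algebra_simps)
  then have "dickson_poly (c * (1 - c)) k
      = bool_mat_prod (\<lambda>_. ?T) k False False + bool_mat_prod (\<lambda>_. ?T) k True True"
    using trace_bool_mat_prod_const[of ?T k] by simp
  also have "\<dots> = (\<Sum>S\<in>Pow {1..k}. ?trace S)"
    by (simp only: sum.distrib sum_Pow_bool_mat_prod[where F = "\<lambda>_. gap_step c"])
  also have "\<dots> = ?trace {} + (\<Sum>S\<in>Pow {1..k} - {{}}. ?trace S)"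
    by (rule sum.remove) auto
  also have "?trace {} = [:of_bool (even k) * 2 * c ^ k:]"
    using gap_transfer_empty[of c k] by (simp add: numeral_poly mult.commute)
  also have "(\<Sum>S\<in>Pow {1..k} - {{}}. ?trace S)
      = (\<Sum>S\<in>Pow {1..k} - {{}}. monom ((- c) ^ (k - card S)) (odd_gaps k S))"
    by (rule sum.cong) (auto simp: trace_gap_transfer)
  finally show ?thesis .
qed

lemma sum_qpoly_at_1:
  fixes c :: "'a::comm_ring_1"
  assumes "k \<ge> 1" "i < k"
  shows "(\<Sum>j=1..k-1. (- c) ^ (k - j) * qpoly k j i 1)
    = coeff (dickson_poly (c * (1 - c)) k) i - of_bool (i = 0 \<and> even k) * 2 * c ^ k"
proof -
  let ?P = "Pow {1..k} - {{}}" and ?sets = "\<lambda>j. {S. S \<subseteq> {1..k} \<and> card S = j}"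
  let ?f = "\<lambda>S. of_bool (odd_gaps k S = i) * (- c) ^ (k - card S)"
  have "coeff (dickson_poly (c * (1 - c)) k) i = of_bool (i = 0 \<and> even k) * 2 * c ^ k + (\<Sum>S\<in>?P. ?f S)"
    by (simp add: dickson_poly_odd_gaps coeff_sum coeff_monom coeff_pCons sum.inter_restrict split: nat.split)
  also have "(\<Sum>S\<in>?P. ?f S) = (\<Sum>j\<in>{1..k}. \<Sum>S\<in>{S\<in>?P. card S = j}. ?f S)"
  proof (rule sum.group[symmetric])
    have "card S \<le> k" if "S \<subseteq> {1..k}" for S
      using card_mono[OF _ that] by simp
    moreover have "finite S" if "S \<subseteq> {1..k}" for S
      using that finite_subset by blast
    ultimately show "card ` ?P \<subseteq> {1..k}"
      by (auto simp: Suc_le_eq card_gt_0_iff)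
  qed auto
  also have "\<dots> = (\<Sum>j\<in>{1..k}. (- c) ^ (k - j) * qpoly k j i 1)"
  proof (rule sum.cong[OF refl])
    fix j assume "j \<in> {1..k}"
    then have "{S\<in>?P. card S = j} = ?sets j" by auto
    then show "(\<Sum>S\<in>{S\<in>?P. card S = j}. ?f S) = (- c) ^ (k - j) * qpoly k j i 1"
      using \<open>j \<in> {1..k}\<close> by (simp add: qpoly_at_1 sum.inter_filter[symmetric] mult.commute Int_def)
  qed
  also have "\<dots> = (\<Sum>j=1..k-1. (- c) ^ (k - j) * qpoly k j i 1)"
  proof -
    have "odd_gaps k S \<noteq> i" if "S \<subseteq> {1..k}" "card S = k" for S
    proof -
      have "S = {1..k}" using that by (intro card_subset_eq) auto
      then show ?thesis using assms odd_gaps_atLeastAtMost[of k] by simp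
    qed
    then have none: "{S. S \<subseteq> {1..k} \<and> card S = k \<and> odd_gaps k S = i} = {}"
      by blast
    have "qpoly k k i (1::'a) = 0"
      unfolding qpoly_at_1[OF assms(1)] none by simp
    moreover have "{1..k} = insert k {1..k-1}" using assms by auto
    ultimately show ?thesis by (simp add: sum.insert_if)
  qed
  finally show ?thesis by simp
qed

section \<open>The recursion for Delta\<close>

lemma unitriangular_system_unique:
  fixes w :: "nat \<Rightarrow> nat \<Rightarrow> 'a::comm_ring_1"
  assumes diag: "\<And>k. k \<ge> 1 \<Longrightarrow> w k k = 1"
    and x: "\<And>k. k \<ge> 1 \<Longrightarrow> (\<Sum>a\<le>k. w k a * x a) = r k"
    and y: "\<And>k. k \<ge> 1 \<Longrightarrow> (\<Sum>a\<le>k. w k a * y a) = r k"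
    and "x 0 = y 0"
  shows "x k = y k"
proof (induction k rule: less_induct)
  case (less k)
  show ?case
  proof (cases k)
    case (Suc m)
    then have "x k + (\<Sum>a<k. w k a * x a) = r k" "y k + (\<Sum>a<k. w k a * y a) = r k"
      using x[of k] y[of k] diag[of k] by (simp_all add: lessThan_Suc_atMost[symmetric] add.commute)
    moreover have "(\<Sum>a<k. w k a * x a) = (\<Sum>a<k. w k a * y a)"
      using less.IH by simp
    ultimately show ?thesis
      by (metis add_right_cancel)
  qed (simp add: assms(4))
qed

theorem lemma5p3:
  fixes \<alpha> :: real and N :: nat and A B :: "complex mat"
    and \<Delta> \<delta> :: "nat \<Rightarrow> complex"
  assumes "0 < \<alpha>" and "\<alpha> < 1"
    and "orth_proj N A" and "orth_proj N B"
  assumes \<Delta>0: "\<Delta> 0 = tr A - of_real \<alpha> * of_nat N"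
    and \<Delta>k: "\<And>k. k \<ge> 1 \<Longrightarrow> \<Delta> k =
        - (\<Sum>a=0..k-1. \<Delta> a * (\<Sum>j=1..k-1. of_real ((-\<alpha>) ^ (k - j)) * qpoly k j a 1))
        + (if odd k then 2 * of_real (\<alpha> ^ k) * (tr B - of_nat N / 2) else 0)
        + tr (((A - of_real \<alpha> \<cdot>\<^sub>m 1\<^sub>m N) * (2 \<cdot>\<^sub>m B - 1\<^sub>m N)) ^\<^sub>m k)"
  assumes \<delta>0: "\<delta> 0 = tr A - of_real \<alpha> * of_nat N"
    and \<delta>k: "\<And>k. k \<ge> 1 \<Longrightarrow> \<delta> k =
        tr (((A - of_real \<alpha> \<cdot>\<^sub>m 1\<^sub>m N) * (2 \<cdot>\<^sub>m B - 1\<^sub>m N)) ^\<^sub>m k)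
        + (if even k then 2 * of_real (\<alpha> ^ k) * (tr A - of_real \<alpha> * of_nat N) else 0)
        + (if odd k then 2 * of_real (\<alpha> ^ k) * (tr B - of_nat N / 2) else 0)"
  shows "\<forall>k\<ge>1. \<Delta> k = (\<Sum>a\<in>{a. a \<le> k \<and> a mod 2 = k mod 2}.
            of_nat (k choose ((k + a) div 2)) * of_real ((\<alpha> * (1 - \<alpha>)) ^ ((k - a) div 2)) * \<delta> a)"
proof -
  define c where "c = complex_of_real \<alpha>"
  define w where "w k i = coeff (dickson_poly (c * (1 - c)) k) i - of_bool (i = 0) * (of_bool (even k) * 2 * c ^ k)"
    for k i
  define R where "R k = (\<Sum>d\<le>k. power_dickson_coeff (c * (1 - c)) k d * \<delta> d)" for k
  have Delta_system: "(\<Sum>i\<le>k. w k i * \<Delta> i) = \<delta> k - of_bool (even k) * 2 * c ^ k * \<delta> 0" if "k \<ge> 1" for k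
  proof -
    have "(\<Sum>j=1..k-1. of_real ((-\<alpha>) ^ (k - j)) * qpoly k j i 1) = w k i" if "i < k" for i
      using sum_qpoly_at_1[OF \<open>k \<ge> 1\<close> that, of c] by (simp add: w_def c_def)
    then have "\<Delta> k = - (\<Sum>i<k. w k i * \<Delta> i) + \<delta> k - of_bool (even k) * 2 * c ^ k * \<delta> 0"
      using \<Delta>k[OF that] \<delta>k[OF that] \<delta>0 that
      by (simp add: c_def atLeast0AtMost lessThan_Suc_atMost[symmetric] mult.commute)
    moreover have "w k k = 1"
      using coeff_dickson_poly_top[OF that] that by (simp add: w_def)
    ultimately show ?thesis
      using that by (simp add: lessThan_Suc_atMost[symmetric])
  qed
  have R_system: "(\<Sum>i\<le>k. w k i * R i) = \<delta> k - of_bool (even k) * 2 * c ^ k * \<delta> 0" if "k \<ge> 1" for k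
    unfolding w_def R_def by (rule sum_reduced_coeff_dickson_poly_power_expansion[OF that])
  have "\<Delta> k = R k" for k
    by (rule unitriangular_system_unique[of w, OF _ Delta_system R_system])
      (simp_all add: w_def coeff_dickson_poly_top \<Delta>0 \<delta>0 R_def power_dickson_coeff_def)
  moreover have "(\<Sum>a\<in>{a. a \<le> k \<and> a mod 2 = k mod 2}.
      of_nat (k choose ((k + a) div 2)) * of_real ((\<alpha> * (1 - \<alpha>)) ^ ((k - a) div 2)) * \<delta> a) = R k" for k
    using sum_same_parity_eq_power_dickson_coeff[of k "c * (1 - c)" \<delta>] by (simp add: R_def c_def)
  ultimately show ?thesis by simp
qed

end
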